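(* Let $x\in V$ be a non-leaf vertex of $T$. If $y$ is a vertex lying strictly below $r(x)$ on the path $\pi(s,u_{H_x})$, then $s$ is connected to $H_x$ in $G\setminus\{x,y\}$.
   Context: $G=(V,E)$ is a connected graph with no cut vertex, $T$ a BFS tree rooted at $s$, $\pi(u,v)$ the $T$-path, $T_x$ the subtree at $x$, $V_x=V(T_x)\setminus\{x\}$. $x_h$ is the heavy child of $x$ (child with largest subtree, ties broken consistently). $\mathcal{C}_x$ is the set of connected components of $G[V_x]$, and $H_x$ is the one containing $x_h$. A fixed edge $(u_{H_x},v_{H_x})\in E$ with $v_{H_x}\in H_x$ and $u_{H_x}\notin V(T_x)$ is chosen. $R(x)=\{v\in V\setminus V(T_x): v\text{ has a neighbour in }H_x\}$ and $r(x)$ is the lowest common ancestor in $T$ of all vertices of $R(x)$ (so $r(x)$ lies on $\pi(s,u_{H_x})$). *)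

theory Defs
  imports Main
begin

text \<open>Simple undirected graph: finite vertex set V, symmetric irreflexive edge relation E
  on V. A rooted tree is represented by its parent function par (par s is irrelevant).\<close>

definition adj_in :: "('a \<Rightarrow> 'a \<Rightarrow> bool) \<Rightarrow> 'a set \<Rightarrow> 'a \<Rightarrow> 'a \<Rightarrow> bool" where
  "adj_in E S a b \<longleftrightarrow> a \<in> S \<and> b \<in> S \<and> E a b"

definition reach_in :: "('a \<Rightarrow> 'a \<Rightarrow> bool) \<Rightarrow> 'a set \<Rightarrow> 'a \<Rightarrow> 'a \<Rightarrow> bool" where
  "reach_in E S a b \<longleftrightarrow> a \<in> S \<and> b \<in> S \<and> (adj_in E S)\<^sup>*\<^sup>* a b"

definition graph_connected :: "'a set \<Rightarrow> ('a \<Rightarrow> 'a \<Rightarrow> bool) \<Rightarrow> bool" where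
  "graph_connected V E \<longleftrightarrow> (\<forall>a\<in>V. \<forall>b\<in>V. reach_in E V a b)"

definition no_cut_vertex :: "'a set \<Rightarrow> ('a \<Rightarrow> 'a \<Rightarrow> bool) \<Rightarrow> bool" where
  "no_cut_vertex V E \<longleftrightarrow> (\<forall>v\<in>V. graph_connected (V - {v}) E)"

definition simple_graph :: "'a set \<Rightarrow> ('a \<Rightarrow> 'a \<Rightarrow> bool) \<Rightarrow> bool" where
  "simple_graph V E \<longleftrightarrow> finite V \<and> (\<forall>a b. E a b \<longrightarrow> a \<in> V \<and> b \<in> V \<and> E b a \<and> a \<noteq> b)"

definition gdist :: "'a set \<Rightarrow> ('a \<Rightarrow> 'a \<Rightarrow> bool) \<Rightarrow> 'a \<Rightarrow> 'a \<Rightarrow> nat" where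
  "gdist V E a b = (LEAST n. (adj_in E V ^^ n) a b)"

definition bfs_tree :: "'a set \<Rightarrow> ('a \<Rightarrow> 'a \<Rightarrow> bool) \<Rightarrow> 'a \<Rightarrow> ('a \<Rightarrow> 'a) \<Rightarrow> bool" where
  "bfs_tree V E s par \<longleftrightarrow> s \<in> V \<and>
     (\<forall>v\<in>V - {s}. par v \<in> V \<and> E v (par v) \<and> gdist V E s v = gdist V E s (par v) + 1)"

text \<open>tanc V s par a v: a is an ancestor of v in T (a lies on pi(s,v)), reflexive.\<close>
definition tanc :: "'a set \<Rightarrow> 'a \<Rightarrow> ('a \<Rightarrow> 'a) \<Rightarrow> 'a \<Rightarrow> 'a \<Rightarrow> bool" where
  "tanc V s par a v \<longleftrightarrow> (\<lambda>c p. c \<in> V \<and> c \<noteq> s \<and> p = par c)\<^sup>*\<^sup>* v a"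

definition subtree :: "'a set \<Rightarrow> 'a \<Rightarrow> ('a \<Rightarrow> 'a) \<Rightarrow> 'a \<Rightarrow> 'a set" where
  "subtree V s par x = {v \<in> V. tanc V s par x v}"

definition tchildren :: "'a set \<Rightarrow> 'a \<Rightarrow> ('a \<Rightarrow> 'a) \<Rightarrow> 'a \<Rightarrow> 'a set" where
  "tchildren V s par x = {c \<in> V. c \<noteq> s \<and> par c = x}"

definition heavy_child :: "'a set \<Rightarrow> 'a \<Rightarrow> ('a \<Rightarrow> 'a) \<Rightarrow> 'a \<Rightarrow> 'a \<Rightarrow> bool" where
  "heavy_child V s par x h \<longleftrightarrow> h \<in> tchildren V s par x \<and>
     (\<forall>c\<in>tchildren V s par x. card (subtree V s par c) \<le> card (subtree V s par h))"

definition is_lca :: "'a set \<Rightarrow> 'a \<Rightarrow> ('a \<Rightarrow> 'a) \<Rightarrow> 'a set \<Rightarrow> 'a \<Rightarrow> bool" where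
  "is_lca V s par R r \<longleftrightarrow> r \<in> V \<and> (\<forall>w\<in>R. tanc V s par r w) \<and>
     (\<forall>a\<in>V. (\<forall>w\<in>R. tanc V s par a w) \<longrightarrow> tanc V s par a r)"

end

theory Submission
  imports Defs
begin

text \<open>Since y lies strictly below the lowest common ancestor r of R, it is not an ancestor of
  some w \<in> R. The tree path from s to w avoids y, and it avoids x because w lies outside T_x.
  The neighbour h \<in> H of w differs from x, and from y because y is an ancestor of u \<notin> T_x.
  Hence the tree path followed by the edge w h joins s to H in G - {x, y}.\<close>

lemma tanc_refl [simp]: "tanc V s par v v"
  unfolding tanc_def by simp

lemma tanc_trans: "tanc V s par a b \<Longrightarrow> tanc V s par b c \<Longrightarrow> tanc V s par a c"
  unfolding tanc_def by (meson rtranclp_trans)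

lemma tanc_parI:
  assumes "w \<in> V" "w \<noteq> s" "tanc V s par a (par w)"
  shows "tanc V s par a w"
  using assms unfolding tanc_def by (simp add: converse_rtranclp_into_rtranclp)

lemma tanc_closed:
  assumes bfs: "bfs_tree V E s par" and "tanc V s par a v" and "v \<in> V"
  shows "a \<in> V"
proof -
  have "(\<lambda>c p. c \<in> V \<and> c \<noteq> s \<and> p = par c)\<^sup>*\<^sup>* v a" using assms(2) unfolding tanc_def .
  then show ?thesis
    by induction (use \<open>v \<in> V\<close> bfs in \<open>auto simp: bfs_tree_def\<close>)
qed

lemma tanc_gdist_less:
  assumes bfs: "bfs_tree V E s par" and "tanc V s par a v" and "a \<noteq> v"
  shows "gdist V E s a < gdist V E s v"
proof -
  have "(\<lambda>c p. c \<in> V \<and> c \<noteq> s \<and> p = par c)\<^sup>*\<^sup>* v a" using assms(2) unfolding tanc_def .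
  then have "a = v \<or> gdist V E s a < gdist V E s v"
  proof induction
    case (step b c)
    then show ?case using bfs unfolding bfs_tree_def by fastforce
  qed simp
  then show ?thesis using \<open>a \<noteq> v\<close> by simp
qed

lemma tanc_antisym:
  assumes "bfs_tree V E s par" "tanc V s par a b" "tanc V s par b a"
  shows "a = b"
  using tanc_gdist_less[OF assms(1,2)] tanc_gdist_less[OF assms(1,3)] by fastforce

lemma reach_in_snoc:
  "reach_in E S a b \<Longrightarrow> adj_in E S b c \<Longrightarrow> reach_in E S a c"
  unfolding reach_in_def adj_in_def by (auto intro: rtranclp.rtrancl_into_rtrancl)

lemma reach_in_root_avoiding_non_ancestors:
  assumes graph: "simple_graph V E" and bfs: "bfs_tree V E s par"
    and "w \<in> V" and "\<forall>z\<in>X. \<not> tanc V s par z w"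
  shows "reach_in E (V - X) s w"
  using assms(3,4)
proof (induction "gdist V E s w" arbitrary: w rule: less_induct)
  case (less w)
  show ?case
  proof (cases "w = s")
    case True
    then show ?thesis using less.prems by (auto simp: reach_in_def)
  next
    case False
    have par: "par w \<in> V" "E (par w) w" "gdist V E s (par w) < gdist V E s w"
      using bfs graph less.prems(1) False unfolding bfs_tree_def simple_graph_def by auto
    have par_ok: "\<forall>z\<in>X. \<not> tanc V s par z (par w)"
      using less.prems tanc_parI[OF less.prems(1) False] by blast
    have "reach_in E (V - X) s (par w)"
      using less.hyps[OF par(3) par(1) par_ok] .
    moreover have "par w \<notin> X" "w \<notin> X"
      using par_ok less.prems(2) by auto
    then have "adj_in E (V - X) (par w) w"
      using par less.prems(1) unfolding adj_in_def by simp
    ultimately show ?thesis by (rule reach_in_snoc)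
  qed
qed

lemma lca_not_ancestor_of_all:
  assumes bfs: "bfs_tree V E s par" and lca: "is_lca V s par R r"
    and "y \<in> V" and "tanc V s par r y" and "y \<noteq> r"
  shows "\<exists>w\<in>R. \<not> tanc V s par y w"
proof (rule ccontr)
  assume "\<not> ?thesis"
  then have "tanc V s par y r" using lca \<open>y \<in> V\<close> unfolding is_lca_def by auto
  then show False using tanc_antisym[OF bfs _ \<open>tanc V s par r y\<close>] \<open>y \<noteq> r\<close> by auto
qed

theorem mainTheorem12:
  fixes V :: "'a set" and E :: "'a \<Rightarrow> 'a \<Rightarrow> bool" and s x xh u v r y :: 'a
    and par :: "'a \<Rightarrow> 'a"
  assumes graph: "simple_graph V E"
    and conn: "graph_connected V E"
    and nocut: "no_cut_vertex V E"
    and bfs: "bfs_tree V E s par"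
    and xV: "x \<in> V"
    and nonleaf: "tchildren V s par x \<noteq> {}"
    and heavy: "heavy_child V s par x xh"
    and H_def: "H = {w \<in> subtree V s par x - {x}. reach_in E (subtree V s par x - {x}) xh w}"
    and edge: "E u v" and vH: "v \<in> H" and uout: "u \<in> V - subtree V s par x"
    and R_def: "R = {w \<in> V - subtree V s par x. \<exists>h\<in>H. E w h}"
    and lca: "is_lca V s par R r"
    and y_on_path: "tanc V s par y u"
    and y_below: "tanc V s par r y" and y_ne: "y \<noteq> r"
  shows "\<exists>h\<in>H. reach_in E (V - {x, y}) s h"
proof -
  have "y \<in> V" using tanc_closed[OF bfs y_on_path] uout by blast
  then obtain w where "w \<in> R" and w_y: "\<not> tanc V s par y w"
    using lca_not_ancestor_of_all[OF bfs lca _ y_below y_ne] by blast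
  then obtain h where "w \<in> V" and w_x: "\<not> tanc V s par x w" and "h \<in> H" "E w h"
    unfolding R_def subtree_def by blast
  then have h: "h \<in> V" "tanc V s par x h" "h \<noteq> x"
    unfolding H_def subtree_def by auto
  have s_to_w: "reach_in E (V - {x, y}) s w"
    by (rule reach_in_root_avoiding_non_ancestors[OF graph bfs \<open>w \<in> V\<close>]) (use w_x w_y in auto)
  have "h \<noteq> y"
    using h(2) tanc_trans[OF _ y_on_path] uout unfolding subtree_def by auto
  then have "adj_in E (V - {x, y}) w h"
    using s_to_w h \<open>E w h\<close> unfolding reach_in_def adj_in_def by auto
  then have "reach_in E (V - {x, y}) s h" by (rule reach_in_snoc[OF s_to_w])
  with \<open>h \<in> H\<close> show ?thesis by blast
qed

end
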